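(* Let $p$ be an odd prime and $b,c\in\mathbb Z$. Then $$\binom{p-1}{p-k}_{b,c}\equiv u_k(-b,c)\pmod p\qquad\text{for all } k=0,1,\ldots,p-1.$$
   Context: For $n\in\mathbb N$ and $b,c\in\mathbb Z$, the generalized trinomial coefficients $\binom{n}{k}_{b,c}$ ($k\in\mathbb Z$) are the integers defined by $\left(x+b+\frac{c}{x}\right)^n=\sum_{k\in\mathbb Z}\binom{n}{k}_{b,c}x^k$. For $A,B\in\mathbb Z$, the Lucas sequence $u_n=u_n(A,B)$ ($n\in\mathbb N$) is defined by $u_0=0$, $u_1=1$, and $u_{n+1}=Au_n-Bu_{n-1}$ for $n\ge1$. *)

theory Defs
  imports "HOL-Computational_Algebra.Formal_Laurent_Series" "HOL-Number_Theory.Cong"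
begin

definition gtrinom :: "nat \<Rightarrow> int \<Rightarrow> int \<Rightarrow> int \<Rightarrow> int" where
  "gtrinom n k b c =
     fls_nth ((fls_X + fls_const b + fls_const c * fls_X_inv) ^ n :: int fls) k"

fun lucas_u :: "int \<Rightarrow> int \<Rightarrow> nat \<Rightarrow> int" where
  "lucas_u A B 0 = 0"
| "lucas_u A B (Suc 0) = 1"
| "lucas_u A B (Suc (Suc n)) = A * lucas_u A B (Suc n) - B * lucas_u A B n"

end

theory Submission
  imports Defs
begin

unbundle fps_syntax

text \<open>
  Write \<open>L = x + b + c/x\<close> and \<open>M = L\<^sup>p\<^sup>-\<^sup>1\<close>. Since \<open>L * M = L\<^sup>p\<close> and, by the binomial theorem,
  the coefficients of \<open>L\<^sup>p\<close> in degrees \<open>1, \<dots>, p-1\<close> are divisible by \<open>p\<close>,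
  the coefficients \<open>m\<^sub>j\<close> of \<open>M\<close> satisfy \<open>m\<^sub>j\<^sub>-\<^sub>1 + b m\<^sub>j + c m\<^sub>j\<^sub>+\<^sub>1 \<equiv> 0\<close> there. Read downwards
  from the top, \<open>a\<^sub>k = m\<^sub>p\<^sub>-\<^sub>k\<close> therefore obeys the Lucas recurrence \<open>a\<^sub>k\<^sub>+\<^sub>2 \<equiv> -b a\<^sub>k\<^sub>+\<^sub>1 - c a\<^sub>k\<close>,
  and it starts with \<open>a\<^sub>0 = 0\<close>, \<open>a\<^sub>1 = 1\<close> because \<open>M\<close> is monic of degree \<open>p - 1\<close>.
\<close>

definition trinom_fls :: "'a::comm_ring_1 \<Rightarrow> 'a \<Rightarrow> 'a fls" where
  "trinom_fls b c = fls_X + fls_const b + fls_const c * fls_X_inv"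

lemma gtrinom_eq_fls_nth: "gtrinom n k b c = (trinom_fls b c ^ n) $$ k"
  by (simp add: gtrinom_def trinom_fls_def)

lemma fls_nth_trinom_fls_times:
  "(trinom_fls b c * M) $$ j = M $$ (j - 1) + b * M $$ j + c * M $$ (j + 1)"
proof -
  have "trinom_fls b c * M = fls_X * M + fls_const b * M + fls_const c * (fls_X_inv * M)"
    by (simp add: trinom_fls_def distrib_right mult.assoc)
  then show ?thesis
    by (simp add: fls_X_times_conv_shift fls_X_inv_times_conv_shift)
qed

lemma fls_nth_trinom_fls_power_above:
  "j > int n \<Longrightarrow> (trinom_fls b c ^ n) $$ j = 0"
  by (induction n arbitrary: j) (simp_all only: power_Suc fls_nth_trinom_fls_times, auto)

lemma fls_nth_trinom_fls_power_top: "(trinom_fls b c ^ n) $$ int n = 1"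
  by (induction n)
     (simp_all only: power_Suc fls_nth_trinom_fls_times, auto simp: fls_nth_trinom_fls_power_above)

lemma fls_nth_power_const_plus_X_inv_pos:
  fixes b c :: "'a::comm_ring_1"
  shows "j > 0 \<Longrightarrow> ((fls_const b + fls_const c * fls_X_inv) ^ n) $$ j = 0"
proof (induction n arbitrary: j)
  case (Suc n)
  have "(fls_const b + fls_const c * fls_X_inv) ^ Suc n
     = fls_const b * (fls_const b + fls_const c * fls_X_inv) ^ n
       + fls_const c * (fls_X_inv * (fls_const b + fls_const c * fls_X_inv) ^ n)"
    by (simp add: distrib_right mult.assoc)
  then show ?case
    using Suc by (simp add: fls_X_inv_times_conv_shift)
qed simp

lemma prime_dvd_fls_nth_trinom_fls_power:
  fixes p :: nat and j :: int
  assumes "prime p" and "0 < j" and "j < int p"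
  shows "int p dvd (trinom_fls b c ^ p) $$ j"
proof -
  define Y :: "int fls" where "Y = fls_const b + fls_const c * fls_X_inv"
  have "trinom_fls b c ^ p = (fls_X + Y) ^ p"
    by (simp add: trinom_fls_def Y_def add.assoc)
  also have "\<dots> = (\<Sum>k\<le>p. of_nat (p choose k) * fls_X ^ k * Y ^ (p - k))"
    by (rule binomial_ring)
  finally have "(trinom_fls b c ^ p) $$ j
      = (\<Sum>k\<le>p. int (p choose k) * (fls_X ^ k * Y ^ (p - k)) $$ j)"
    by (simp add: fls_nth_sum mult.assoc)
  also have "int p dvd \<dots>"
  proof (rule dvd_sum)
    fix k assume "k \<in> {..p}"
    then consider "k = 0" | "k = p" | "0 < k" "k < p"
      by fastforce
    then show "int p dvd int (p choose k) * (fls_X ^ k * Y ^ (p - k)) $$ j"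
    proof cases
      case 1
      then show ?thesis
        using fls_nth_power_const_plus_X_inv_pos[OF assms(2), of b c] by (simp add: Y_def)
    next
      case 2
      then show ?thesis
        using assms(3) by simp
    next
      case 3
      then have "p dvd (p choose k)"
        using assms(1) by (intro dvd_choose_prime) auto
      then show ?thesis
        by (simp add: int_dvd_int_iff)
    qed
  qed
  finally show ?thesis .
qed

lemma lucas_u_cong_by_recurrence:
  fixes a :: "nat \<Rightarrow> int"
  assumes "[a 0 = 0] (mod m)" and "[a 1 = 1] (mod m)"
    and "\<And>n. n + 2 \<le> N \<Longrightarrow> [a (n + 2) = A * a (n + 1) - B * a n] (mod m)"
  shows "k \<le> N \<Longrightarrow> [a k = lucas_u A B k] (mod m)"
proof (induction k rule: less_induct)
  case (less k)
  consider "k = 0" | "k = 1" | n where "k = n + 2"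
    by (metis One_nat_def add_2_eq_Suc' not0_implies_Suc)
  then show ?case
  proof cases
    case (3 n)
    have "[a k = A * a (n + 1) - B * a n] (mod m)"
      using assms(3) less.prems 3 by simp
    also have "[A * a (n + 1) - B * a n = A * lucas_u A B (n + 1) - B * lucas_u A B n] (mod m)"
      using less 3 by (intro cong_diff cong_mult cong_refl) simp_all
    finally show ?thesis
      by (simp add: 3 numeral_2_eq_2)
  qed (use assms in simp_all)
qed

theorem lemma4p2:
  fixes p k :: nat and b c :: int
  assumes "prime p" and "odd p" and "k \<le> p - 1"
  shows "[gtrinom (p - 1) (int p - int k) b c = lucas_u (- b) c k] (mod int p)"
proof -
  define M where "M = trinom_fls b c ^ (p - 1)"
  have "p \<ge> 2"
    using assms(1) prime_ge_2_nat by blast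
  then have L_times_M: "trinom_fls b c * M = trinom_fls b c ^ p"
    by (simp add: M_def power_Suc[symmetric])
  have "[M $$ (int p - int (n + 2))
      = - b * M $$ (int p - int (n + 1)) - c * M $$ (int p - int n)] (mod int p)"
    if "n + 2 \<le> p - 1" for n
  proof -
    define j where "j = int p - int (n + 1)"
    have "int p dvd (trinom_fls b c ^ p) $$ j"
      using that j_def by (intro prime_dvd_fls_nth_trinom_fls_power assms(1)) auto
    then have "int p dvd M $$ (j - 1) + b * M $$ j + c * M $$ (j + 1)"
      by (simp only: L_times_M[symmetric] fls_nth_trinom_fls_times)
    then show ?thesis
      by (simp add: cong_iff_dvd_diff j_def algebra_simps)
  qed
  moreover have "M $$ int p = 0" and "M $$ (int p - 1) = 1"
    using fls_nth_trinom_fls_power_above[of "p - 1" "int p" b c]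
      fls_nth_trinom_fls_power_top[of b c "p - 1"] \<open>p \<ge> 2\<close>
    by (simp_all add: M_def of_nat_diff)
  ultimately show ?thesis
    unfolding gtrinom_eq_fls_nth M_def[symmetric]
    using assms(3) by (intro lucas_u_cong_by_recurrence[where a = "\<lambda>k. M $$ (int p - int k)"]) simp_all
qed

end
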